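(* Let $\delta\in(0,1)$ and assume every simplex of the triangulation $\mathcal T_h$ is non-obtuse (all dihedral angles $\le\pi/2$). Then for all $\mathbb B_h\in\mathcal W_h$ and all $K\in\mathcal T_h$, $$-\big(\nabla\mathbb B_h,\nabla\mathcal I_h\beta_\delta^{-1}(\mathbb B_h)\big)_{L^2(K)}\ \ge\ \frac1d\,\|\nabla\mathcal I_h\operatorname{tr}\ln\beta_\delta(\mathbb B_h)\|_{L^2(K)}^2=\frac1d\,\|\nabla\mathcal I_h\operatorname{tr}\ln\beta_\delta^{-1}(\mathbb B_h)\|_{L^2(K)}^2.$$
   Context: $\mathcal T_h$ is a conforming triangulation of a polyhedral domain $\Omega\subset\mathbb R^d$, $d\in\{2,3\}$, into simplices. $\mathcal W_h$ is the space of continuous functions $\overline\Omega\to\mathbb R^{d\times d}_{\mathrm S}$ (symmetric matrices) affine on each simplex; $\mathcal I_h$ is the nodal piecewise-linear interpolation at the mesh vertices (componentwise for matrices). For symmetric matrices, scalar functions act via the spectral decomposition; $\beta_\delta(s)=\max\{s,\delta\}$ and $\beta_\delta^{-1}(\mathbb B)$ denotes the matrix inverse of $\beta_\delta(\mathbb B)$. $(\nabla\mathbb A,\nabla\mathbb B)_{L^2(K)}=\int_K\sum_k\partial_{x_k}\mathbb A:\partial_{x_k}\mathbb B\,dx$. *)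

theory Defs
  imports "HOL-Analysis.Analysis"
begin

text \<open>Vertices of a simplex in R^d (d = CARD('n)) are indexed by 0..d.\<close>

definition simplex_hull :: "(nat \<Rightarrow> real^'n) \<Rightarrow> (real^'n) set" where
  "simplex_hull v = convex hull (v ` {0..CARD('n)})"

definition bary :: "(nat \<Rightarrow> real^'n) \<Rightarrow> real^'n \<Rightarrow> nat \<Rightarrow> real" where
  "bary v x = (THE u. (\<forall>i. CARD('n) < i \<longrightarrow> u i = 0) \<and> sum u {0..CARD('n)} = 1
                  \<and> (\<Sum>i=0..CARD('n). u i *\<^sub>R v i) = x)"

text \<open>Nodal P1 interpolation on the simplex of the nodal values g 0, ..., g d
  (extended affinely to all of R^d).\<close>
definition p1_interp :: "(nat \<Rightarrow> real^'n) \<Rightarrow> (nat \<Rightarrow> 'b::real_vector) \<Rightarrow> real^'n \<Rightarrow> 'b" where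
  "p1_interp v g x = (\<Sum>i=0..CARD('n). bary v x i *\<^sub>R g i)"

definition pd :: "(real^'n \<Rightarrow> 'b::real_normed_vector) \<Rightarrow> real^'n \<Rightarrow> 'n \<Rightarrow> 'b" where
  "pd f x k = frechet_derivative f (at x) (axis k 1)"

text \<open>Dihedral angle between the facets opposite vertices i and j (i \<noteq> j):
  the angle between the components of v i - v k and v j - v k orthogonal to the
  ridge spanned by the remaining vertices (k one of them). For d = 2 this is the
  interior angle of the triangle at the remaining vertex.\<close>
definition dihedral_angle :: "(nat \<Rightarrow> real^'n) \<Rightarrow> nat \<Rightarrow> nat \<Rightarrow> real" where
  "dihedral_angle v i j =
     (let R = {0..CARD('n)} - {i, j};
          k = Min R;
          S = span ((\<lambda>l. v l - v k) ` R);
          wi = (v i - v k) - closest_point S (v i - v k);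
          wj = (v j - v k) - closest_point S (v j - v k)
      in arccos ((wi \<bullet> wj) / (norm wi * norm wj)))"

definition nonobtuse_simplex :: "(nat \<Rightarrow> real^'n) \<Rightarrow> bool" where
  "nonobtuse_simplex v \<longleftrightarrow>
     (\<forall>i j. i \<le> CARD('n) \<and> j \<le> CARD('n) \<and> i \<noteq> j \<longrightarrow> dihedral_angle v i j \<le> pi / 2)"

definition diag_mat :: "real^'n \<Rightarrow> real^'n^'n" where
  "diag_mat lam = (\<chi> i j. if i = j then lam $ i else 0)"

definition mat_fun :: "(real \<Rightarrow> real) \<Rightarrow> real^'n^'n \<Rightarrow> real^'n^'n" where
  "mat_fun f A = (SOME M. \<exists>Q lam. orthogonal_matrix Q \<and> A = Q ** diag_mat lam ** transpose Q
                        \<and> M = Q ** diag_mat (\<chi> i. f (lam $ i)) ** transpose Q)"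

definition beta :: "real \<Rightarrow> real \<Rightarrow> real" where
  "beta \<delta> s = max s \<delta>"

end

theory Submission
  imports Defs
begin

(* Writing the P1 interpolants through the gradients W_i of the barycentric coordinates, both
   sides become quadratic forms in the nodal values with the stiffness matrix G_ij = W_i . W_j.
   G has zero row sums and, on a non-obtuse simplex, nonpositive off-diagonal entries, so each
   form is a sum over edges of -G_ij >= 0 times an edge term, and it suffices to compare the
   edge terms: for symmetric B and C,
     (tr ln beta(B) - tr ln beta(C))^2 / d <= -(B - C) : (beta(B)^-1 - beta(C)^-1).
   Diagonalising B and C, this reduces to the scalar inequality
     (ln beta(x) - ln beta(y))^2 <= -(x - y) (1/beta(x) - 1/beta(y)),
   which follows from 2 ln t <= t - 1/t and the monotonicity and 1-Lipschitz continuity of beta.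
   The equality holds because tr ln beta(B)^-1 = - tr ln beta(B). *)

section \<open>Spectral theorem for symmetric matrices\<close>

lemma symmetric_matrix_inner:
  fixes A :: "real^'n^'n"
  assumes "transpose A = A"
  shows "(A *v x) \<bullet> y = x \<bullet> (A *v y)"
  by (metis assms dot_lmul_matrix transpose_matrix_vector)

lemma linear_coeff_zero_if_quadratic_nonpos:
  fixes a b :: real
  assumes "\<And>t. b * t + a * t\<^sup>2 \<le> 0"
  shows "b = 0"
proof -
  define q where "q = \<bar>a\<bar> + 1"
  have q: "q > 0" "q + a > 0" by (auto simp: q_def)
  have "b\<^sup>2 * (q + a) = (b * (b / q) + a * (b / q)\<^sup>2) * q\<^sup>2"
    using q by (simp add: field_simps power2_eq_square)
  also have "\<dots> \<le> 0" using assms[of "b / q"] by (simp add: mult_nonpos_nonneg)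
  finally have "b\<^sup>2 \<le> 0" using q by (simp add: mult_le_0_iff)
  then show ?thesis by simp
qed

text \<open>First variation of the Rayleigh quotient at a maximiser \<open>u\<close> in the direction
  \<open>w = A u - m u\<close>: the linear term \<open>2 t (w \<bullet> w)\<close> must vanish.\<close>
lemma rayleigh_maximizer_is_eigenvector:
  fixes A :: "real^'n^'n"
  assumes sym: "transpose A = A" and V: "subspace V" and inv: "\<And>x. x \<in> V \<Longrightarrow> A *v x \<in> V"
    and u: "u \<in> V" "u \<bullet> u = 1"
    and max: "\<And>y. y \<in> V \<Longrightarrow> y \<bullet> (A *v y) \<le> (u \<bullet> (A *v u)) * (y \<bullet> y)"
  shows "A *v u = (u \<bullet> (A *v u)) *\<^sub>R u"
proof -
  define m where "m = u \<bullet> (A *v u)"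
  define w where "w = A *v u - m *\<^sub>R u"
  have wV: "w \<in> V" using inv u V by (simp add: w_def subspace_diff subspace_scale)
  have "(A *v u) \<bullet> u = m" by (simp add: m_def inner_commute)
  then have wu: "w \<bullet> u = 0" using u(2) by (simp add: w_def inner_diff_left)
  have wAu: "w \<bullet> (A *v u) = w \<bullet> w"
  proof -
    have "A *v u = w + m *\<^sub>R u" by (simp add: w_def)
    then show ?thesis using wu by (simp add: inner_add_right)
  qed
  have uAw: "u \<bullet> (A *v w) = w \<bullet> w"
    using symmetric_matrix_inner[OF sym, of u w] wAu by (simp add: inner_commute)
  have "2 * (w \<bullet> w) * t + (w \<bullet> (A *v w) - m * (w \<bullet> w)) * t\<^sup>2 \<le> 0" for t
  proof -
    have "(u + t *\<^sub>R w) \<bullet> (A *v (u + t *\<^sub>R w)) \<le> m * ((u + t *\<^sub>R w) \<bullet> (u + t *\<^sub>R w))"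
      using max[of "u + t *\<^sub>R w"] u wV V by (simp add: subspace_add subspace_scale m_def)
    then show ?thesis
      using u(2) wu wAu uAw
      by (simp add: matrix_vector_right_distrib matrix_vector_mult_scaleR inner_add_left
          inner_add_right inner_commute m_def power2_eq_square algebra_simps)
  qed
  then have "2 * (w \<bullet> w) = 0" by (rule linear_coeff_zero_if_quadratic_nonpos)
  then show ?thesis by (simp add: w_def m_def)
qed

lemma symmetric_eigenvector_exists:
  fixes A :: "real^'n^'n"
  assumes sym: "transpose A = A" and V: "subspace V" and inv: "\<And>x. x \<in> V \<Longrightarrow> A *v x \<in> V"
    and x: "x \<in> V" "x \<noteq> 0"
  shows "\<exists>u\<in>V. norm u = 1 \<and> A *v u = (u \<bullet> (A *v u)) *\<^sub>R u"
proof -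
  let ?S = "sphere 0 1 \<inter> V"
  have "compact ?S" by (simp add: V closed_subspace compact_Int_closed)
  moreover have "x /\<^sub>R norm x \<in> ?S" using x V by (simp add: subspace_scale)
  moreover have "continuous_on ?S (\<lambda>y. y \<bullet> (A *v y))"
    by (intro continuous_intros linear_continuous_on matrix_vector_mul_bounded_linear)
  ultimately obtain u where u: "u \<in> ?S" and umax: "\<And>y. y \<in> ?S \<Longrightarrow> y \<bullet> (A *v y) \<le> u \<bullet> (A *v u)"
    using continuous_attains_sup[of ?S] by blast
  have "y \<bullet> (A *v y) \<le> (u \<bullet> (A *v u)) * (y \<bullet> y)" if "y \<in> V" for y
  proof (cases "y = 0")
    case False
    have "y /\<^sub>R norm y \<in> ?S" using that False V by (simp add: subspace_scale)
    from umax[OF this] False show ?thesis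
      by (simp add: matrix_vector_mult_scaleR field_simps power2_norm_eq_inner[symmetric]
          power2_eq_square)
  qed simp
  with u show ?thesis
    using rayleigh_maximizer_is_eigenvector[OF sym V inv, of u] by (auto simp: norm_eq_1)
qed

lemma symmetric_orthonormal_eigenvectors:
  fixes A :: "real^'n^'n"
  assumes sym: "transpose A = A" and k: "k \<le> CARD('n)"
  shows "\<exists>B. finite B \<and> card B = k \<and> pairwise orthogonal B \<and>
           (\<forall>b\<in>B. norm b = 1 \<and> A *v b = (b \<bullet> (A *v b)) *\<^sub>R b)"
  using k
proof (induction k)
  case 0
  show ?case by (intro exI[of _ "{}"]) auto
next
  case (Suc k)
  then obtain B where B: "finite B" "card B = k" "pairwise orthogonal B"
    and eig: "\<forall>b\<in>B. norm b = 1 \<and> A *v b = (b \<bullet> (A *v b)) *\<^sub>R b"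
    by auto
  have "dim B < DIM(real^'n)"
    using dim_le_card[OF span_superset B(1)] B(2) Suc.prems by simp
  then obtain x where x: "x \<noteq> 0" "\<And>y. y \<in> span B \<Longrightarrow> orthogonal x y"
    using orthogonal_to_subspace_exists by blast
  let ?V = "{y. \<forall>b\<in>B. orthogonal b y}"
  have xV: "x \<in> ?V" using x by (auto simp: span_base orthogonal_commute)
  have "A *v y \<in> ?V" if "y \<in> ?V" for y
  proof clarsimp
    fix b assume b: "b \<in> B"
    have "b \<bullet> (A *v y) = (b \<bullet> (A *v b)) * (b \<bullet> y)"
      using symmetric_matrix_inner[OF sym, of b y] eig b by (metis inner_scaleR_left)
    with that b show "orthogonal b (A *v y)" by (simp add: orthogonal_def)
  qed
  then obtain u where u: "u \<in> ?V" "norm u = 1" "A *v u = (u \<bullet> (A *v u)) *\<^sub>R u"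
    using symmetric_eigenvector_exists[OF sym subspace_orthogonal_to_vectors _ xV x(1)] by blast
  have "u \<notin> B"
    using u(1,2) by (auto simp: orthogonal_def)
  with B eig u show ?case
    by (intro exI[of _ "insert u B"]) (auto simp: pairwise_insert orthogonal_commute)
qed

abbreviation orthodiag :: "real^'n^'n \<Rightarrow> real^'n \<Rightarrow> real^'n^'n" where
  "orthodiag Q lam \<equiv> Q ** diag_mat lam ** transpose Q"

lemma symmetric_orthodiag:
  fixes A :: "real^'n^'n"
  assumes sym: "transpose A = A"
  shows "\<exists>Q lam. orthogonal_matrix Q \<and> A = orthodiag Q lam"
proof -
  obtain B where B: "finite B" "card B = CARD('n)" "pairwise orthogonal B"
    and eig: "\<forall>b\<in>B. norm b = 1 \<and> A *v b = (b \<bullet> (A *v b)) *\<^sub>R b"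
    using symmetric_orthonormal_eigenvectors[OF sym, of "CARD('n)"] by auto
  obtain f where f: "bij_betw f (UNIV::'n set) B"
    using finite_same_card_bij[of "UNIV::'n set" B] B by auto
  define Q where "Q = (\<chi> i j. f j $ i)"
  define lam where "lam = (\<chi> j. f j \<bullet> (A *v f j))"
  have fB: "f i \<in> B" for i using f by (auto simp: bij_betw_def)
  have "orthogonal (f i) (f j)" if "i \<noteq> j" for i j
    using B(3) f that by (auto simp: pairwise_def bij_betw_def inj_on_def)
  then have Q: "orthogonal_matrix Q"
    using eig fB by (simp add: orthogonal_matrix_orthonormal_columns column_def Q_def)
  have "A ** Q = Q ** diag_mat lam"
  proof -
    have "(A ** Q) $ i $ j = (A *v f j) $ i" for i j
      by (simp add: matrix_matrix_mult_def matrix_vector_mult_def Q_def)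
    moreover have "(A *v f j) $ i = (Q ** diag_mat lam) $ i $ j" for i j
    proof -
      have "A *v f j = lam $ j *\<^sub>R f j" using eig fB[of j] by (simp add: lam_def)
      then show ?thesis
        by (simp add: matrix_matrix_mult_def diag_mat_def Q_def if_distrib cong: if_cong)
    qed
    ultimately show ?thesis by (simp add: vec_eq_iff)
  qed
  then have "A = orthodiag Q lam"
    using Q by (metis matrix_mul_assoc matrix_mul_rid orthogonal_matrix_def)
  with Q show ?thesis by blast
qed

lemma mat_fun_symmetric:
  fixes A :: "real^'n^'n"
  assumes "transpose A = A"
  shows "\<exists>Q lam. orthogonal_matrix Q \<and> A = orthodiag Q lam \<and>
           mat_fun f A = orthodiag Q (\<chi> i. f (lam $ i))"
proof -
  have "\<exists>M Q lam. orthogonal_matrix Q \<and> A = orthodiag Q lam \<and>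
          M = orthodiag Q (\<chi> i. f (lam $ i))"
    using symmetric_orthodiag[OF assms] by blast
  from someI_ex[OF this] show ?thesis unfolding mat_fun_def by blast
qed

section \<open>Orthogonally diagonalised matrices\<close>

lemma orthodiag_entry:
  "orthodiag Q lam $ a $ b = (\<Sum>k\<in>UNIV. Q$a$k * lam$k * Q$b$k)"
  by (simp add: matrix_matrix_mult_def diag_mat_def transpose_def if_distrib sum.delta'
      cong: if_cong)

lemma transpose_orthodiag: "transpose (orthodiag Q lam) = orthodiag Q lam"
proof -
  have entry: "transpose M $ i $ j = M $ j $ i" for M :: "real^'n^'n" and i j
    by (simp add: transpose_def)
  show ?thesis unfolding vec_eq_iff entry orthodiag_entry by (simp add: mult_ac)
qed

lemma orthogonal_matrix_columns:
  fixes P :: "real^'n^'n"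
  assumes "orthogonal_matrix P"
  shows "(\<Sum>a\<in>UNIV. P$a$i * P$a$k) = (if i = k then 1 else 0)"
proof -
  have "(transpose P ** P) $ i $ k = mat 1 $ i $ k"
    using assms by (simp add: orthogonal_matrix_def)
  then show ?thesis by (simp add: matrix_matrix_mult_def transpose_def mat_def)
qed

lemma sum_swap3:
  "(\<Sum>a\<in>A. \<Sum>b\<in>B. \<Sum>k\<in>C. f a b k) = (\<Sum>k\<in>C. \<Sum>a\<in>A. \<Sum>b\<in>B. f a b k)"
proof -
  have "(\<Sum>a\<in>A. \<Sum>b\<in>B. \<Sum>k\<in>C. f a b k) = (\<Sum>a\<in>A. \<Sum>k\<in>C. \<Sum>b\<in>B. f a b k)"
    by (rule sum.cong[OF refl], rule sum.swap)
  also have "\<dots> = (\<Sum>k\<in>C. \<Sum>a\<in>A. \<Sum>b\<in>B. f a b k)" by (rule sum.swap)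
  finally show ?thesis .
qed

lemma orthodiag_quadratic_form:
  "(\<Sum>a\<in>UNIV. \<Sum>b\<in>UNIV. c$a * orthodiag Q lam $a$b * c$b)
     = (\<Sum>k\<in>UNIV. lam$k * (\<Sum>a\<in>UNIV. c$a * Q$a$k)\<^sup>2)"
proof -
  have "(\<Sum>a\<in>UNIV. \<Sum>b\<in>UNIV. c$a * orthodiag Q lam $a$b * c$b)
      = (\<Sum>a\<in>UNIV. \<Sum>b\<in>UNIV. \<Sum>k\<in>UNIV. lam$k * ((c$a * Q$a$k) * (c$b * Q$b$k)))"
    by (simp add: orthodiag_entry sum_distrib_left sum_distrib_right mult_ac)
  also have "\<dots> = (\<Sum>k\<in>UNIV. \<Sum>a\<in>UNIV. \<Sum>b\<in>UNIV. lam$k * ((c$a * Q$a$k) * (c$b * Q$b$k)))"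
    by (rule sum_swap3)
  also have "\<dots> = (\<Sum>k\<in>UNIV. lam$k * (\<Sum>a\<in>UNIV. c$a * Q$a$k)\<^sup>2)"
  proof -
    have "(\<Sum>a\<in>UNIV. c$a * Q$a$k)\<^sup>2 = (\<Sum>a\<in>UNIV. \<Sum>b\<in>UNIV. (c$a * Q$a$k) * (c$b * Q$b$k))" for k
      by (simp add: power2_eq_square sum_product)
    then show ?thesis by (simp add: sum_distrib_left)
  qed
  finally show ?thesis .
qed

text \<open>For orthogonal \<open>P\<close>, \<open>Q\<close> the squared column overlaps form a doubly stochastic matrix;
  averaging against it turns inequalities between eigenvalues into inequalities between
  matrices.\<close>
definition overlap :: "real^'n^'n \<Rightarrow> real^'n^'n \<Rightarrow> 'n \<Rightarrow> 'n \<Rightarrow> real" where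
  "overlap P Q k l = (\<Sum>i\<in>UNIV. P$i$k * Q$i$l)\<^sup>2"

lemma overlap_nonneg: "overlap P Q k l \<ge> 0"
  by (simp add: overlap_def)

lemma overlap_commute: "overlap P Q k l = overlap Q P l k"
  by (simp add: overlap_def mult.commute)

lemma overlap_self:
  "orthogonal_matrix P \<Longrightarrow> overlap P P k l = (if k = l then 1 else 0)"
  by (simp add: overlap_def orthogonal_matrix_columns)

lemma column_quadratic_form_orthodiag:
  "(\<Sum>a\<in>UNIV. \<Sum>b\<in>UNIV. P$a$i * orthodiag Q lam $a$b * P$b$i)
     = (\<Sum>k\<in>UNIV. lam$k * overlap P Q i k)"
  using orthodiag_quadratic_form[of "\<chi> a. P$a$i"] by (simp add: overlap_def)

lemma sum_overlap_right:
  fixes P Q :: "real^'n^'n"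
  assumes "orthogonal_matrix P" "orthogonal_matrix Q"
  shows "(\<Sum>l\<in>UNIV. overlap P Q k l) = 1"
proof -
  have "(\<Sum>l\<in>UNIV. overlap P Q k l)
      = (\<Sum>a\<in>UNIV. \<Sum>b\<in>UNIV. P$a$k * orthodiag Q (\<chi> i. 1) $a$b * P$b$k)"
    by (simp add: column_quadratic_form_orthodiag)
  also have "orthodiag Q (\<chi> i. 1) = mat 1"
  proof -
    have "diag_mat (\<chi> i. 1) = (mat 1 :: real^'n^'n)"
      by (simp add: diag_mat_def mat_def vec_eq_iff)
    with assms(2) show ?thesis by (metis matrix_mul_rid orthogonal_matrix_def)
  qed
  also have "(\<Sum>a\<in>UNIV. \<Sum>b\<in>UNIV. P$a$k * (mat 1 :: real^'n^'n) $a$b * P$b$k)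
      = (\<Sum>a\<in>UNIV. P$a$k * P$a$k)"
  proof -
    have "P$a$k * (mat 1 :: real^'n^'n) $a$b * P$b$k = (if b = a then P$a$k * P$a$k else 0)" for a b :: 'n
      by (simp add: mat_def)
    then show ?thesis by simp
  qed
  finally show ?thesis using assms(1) by (simp add: orthogonal_matrix_columns)
qed

lemma sum_overlap_left:
  "orthogonal_matrix P \<Longrightarrow> orthogonal_matrix Q \<Longrightarrow> (\<Sum>k\<in>UNIV. overlap P Q k l) = 1"
  by (simp add: overlap_commute[of P Q] sum_overlap_right)

lemma sum_overlap_add:
  assumes "orthogonal_matrix P" "orthogonal_matrix Q"
  shows "(\<Sum>k\<in>UNIV. \<Sum>l\<in>UNIV. overlap P Q k l * (f k + g l)) = sum f UNIV + sum g UNIV"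
proof -
  have "(\<Sum>k\<in>UNIV. \<Sum>l\<in>UNIV. overlap P Q k l * f k) = (\<Sum>k\<in>UNIV. (\<Sum>l\<in>UNIV. overlap P Q k l) * f k)"
    by (simp only: sum_distrib_right)
  also have "\<dots> = sum f UNIV" using assms by (simp add: sum_overlap_right)
  moreover have "(\<Sum>k\<in>UNIV. \<Sum>l\<in>UNIV. overlap P Q k l * g l) = (\<Sum>l\<in>UNIV. (\<Sum>k\<in>UNIV. overlap P Q k l) * g l)"
    by (subst sum.swap) (simp only: sum_distrib_right)
  moreover have "\<dots> = sum g UNIV" using assms by (simp add: sum_overlap_left)
  ultimately show ?thesis by (simp add: distrib_left sum.distrib)
qed

lemma inner_orthodiag:
  "orthodiag P a \<bullet> orthodiag Q b = (\<Sum>k\<in>UNIV. \<Sum>l\<in>UNIV. overlap P Q k l * (a$k * b$l))"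
proof -
  let ?X = "orthodiag P a"
  have "?X \<bullet> orthodiag Q b = (\<Sum>i\<in>UNIV. \<Sum>j\<in>UNIV. \<Sum>l\<in>UNIV. b$l * (Q$i$l * ?X$i$j * Q$j$l))"
    by (simp add: inner_vec_def orthodiag_entry[of Q] sum_distrib_left mult_ac)
  also have "\<dots> = (\<Sum>l\<in>UNIV. b$l * (\<Sum>i\<in>UNIV. \<Sum>j\<in>UNIV. Q$i$l * ?X$i$j * Q$j$l))"
    by (subst sum_swap3) (simp add: sum_distrib_left)
  also have "\<dots> = (\<Sum>l\<in>UNIV. \<Sum>k\<in>UNIV. overlap P Q k l * (a$k * b$l))"
    by (simp only: column_quadratic_form_orthodiag)
      (simp add: overlap_commute[of Q P] sum_distrib_left mult_ac)
  also have "\<dots> = (\<Sum>k\<in>UNIV. \<Sum>l\<in>UNIV. overlap P Q k l * (a$k * b$l))"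
    by (rule sum.swap)
  finally show ?thesis .
qed

lemma inner_orthodiag_same:
  assumes "orthogonal_matrix P"
  shows "orthodiag P a \<bullet> orthodiag P b = (\<Sum>k\<in>UNIV. a$k * b$k)"
proof -
  have "overlap P P k l * y = (if l = k then y else 0)" for k l and y :: real
    using assms by (simp add: overlap_self)
  then show ?thesis by (simp add: inner_orthodiag)
qed

lemma neg_inner_diff_orthodiag:
  assumes P: "orthogonal_matrix P" and Q: "orthogonal_matrix Q"
  shows "- ((orthodiag P a - orthodiag Q b) \<bullet> (orthodiag P c - orthodiag Q d))
    = (\<Sum>k\<in>UNIV. \<Sum>l\<in>UNIV. overlap P Q k l * - ((a$k - b$l) * (c$k - d$l)))"
proof -
  have same: "orthodiag P a \<bullet> orthodiag P c + orthodiag Q b \<bullet> orthodiag Q d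
      = (\<Sum>k\<in>UNIV. \<Sum>l\<in>UNIV. overlap P Q k l * (a$k * c$k + b$l * d$l))"
    unfolding inner_orthodiag_same[OF P] inner_orthodiag_same[OF Q]
    by (rule sum_overlap_add[OF P Q, symmetric])
  have "- ((orthodiag P a - orthodiag Q b) \<bullet> (orthodiag P c - orthodiag Q d))
      = orthodiag P a \<bullet> orthodiag Q d + orthodiag P c \<bullet> orthodiag Q b
        - (orthodiag P a \<bullet> orthodiag P c + orthodiag Q b \<bullet> orthodiag Q d)"
    by (simp add: inner_diff_left inner_diff_right inner_commute)
  also have "\<dots> = (\<Sum>k\<in>UNIV. \<Sum>l\<in>UNIV. overlap P Q k l * (a$k * d$l + c$k * b$l
                      - (a$k * c$k + b$l * d$l)))"
    unfolding same inner_orthodiag[of P a Q d] inner_orthodiag[of P c Q b]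
    by (simp add: distrib_left right_diff_distrib sum.distrib sum_subtractf)
  also have "\<dots> = (\<Sum>k\<in>UNIV. \<Sum>l\<in>UNIV. overlap P Q k l * - ((a$k - b$l) * (c$k - d$l)))"
    by (simp add: algebra_simps)
  finally show ?thesis .
qed

lemma matrix_inv_eqI:
  fixes A B :: "'a::semiring_1^'n^'n"
  assumes AB: "A ** B = mat 1" and BA: "B ** A = mat 1"
  shows "matrix_inv A = B"
proof -
  have "\<exists>X. A ** X = mat 1 \<and> X ** A = mat 1" using AB BA by blast
  then have "matrix_inv A ** A = mat 1"
    unfolding matrix_inv_def by (rule someI2_ex) blast
  then have "matrix_inv A = matrix_inv A ** (A ** B)" by (simp add: AB)
  also have "\<dots> = B" by (simp add: matrix_mul_assoc \<open>matrix_inv A ** A = mat 1\<close>)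
  finally show ?thesis .
qed

lemma orthodiag_mult:
  fixes Q :: "real^'n^'n"
  assumes "orthogonal_matrix Q"
  shows "orthodiag Q a ** orthodiag Q b = orthodiag Q (\<chi> i. a$i * b$i)"
proof -
  have "(if i = k then a$i else 0) * (if k = j then b$k else 0)
        = (if k = i then (if i = j then a$i * b$i else 0) else 0)" for i j k :: 'n
    by auto
  then have diag: "diag_mat a ** diag_mat b = diag_mat (\<chi> i. a$i * b$i)"
    by (simp add: vec_eq_iff matrix_matrix_mult_def diag_mat_def)
  have "orthodiag Q a ** orthodiag Q b
      = Q ** diag_mat a ** (transpose Q ** Q) ** diag_mat b ** transpose Q"
    by (simp add: matrix_mul_assoc)
  also have "\<dots> = Q ** (diag_mat a ** diag_mat b) ** transpose Q"
    using assms by (simp add: orthogonal_matrix_def matrix_mul_assoc)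
  finally show ?thesis by (simp only: diag)
qed

lemma matrix_inv_orthodiag:
  assumes Q: "orthogonal_matrix Q" and a: "\<And>i. a$i \<noteq> 0"
  shows "matrix_inv (orthodiag Q a) = orthodiag Q (\<chi> i. 1 / a$i)"
proof (rule matrix_inv_eqI)
  have "orthodiag Q (\<chi> i. 1) = mat 1"
  proof -
    have "diag_mat (\<chi> i. 1) = (mat 1 :: real^'n^'n)"
      by (simp add: diag_mat_def mat_def vec_eq_iff)
    with Q show ?thesis by (metis matrix_mul_rid orthogonal_matrix_def)
  qed
  moreover have "(\<chi> i. a$i * (\<chi> i. 1 / a$i)$i) = (\<chi> i. 1)" "(\<chi> i. (\<chi> i. 1 / a$i)$i * a$i) = (\<chi> i. 1)"
    using a by (simp_all add: vec_eq_iff)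
  ultimately show "orthodiag Q a ** orthodiag Q (\<chi> i. 1 / a$i) = mat 1"
    "orthodiag Q (\<chi> i. 1 / a$i) ** orthodiag Q a = mat 1"
    by (simp_all only: orthodiag_mult[OF Q])
qed

lemma det_orthodiag:
  assumes "orthogonal_matrix Q"
  shows "det (orthodiag Q lam) = (\<Prod>i\<in>UNIV. lam$i)"
proof -
  have "det Q * det Q = 1" using det_orthogonal_matrix[OF assms] by auto
  moreover have "det (diag_mat lam) = (\<Prod>i\<in>UNIV. lam$i)"
    by (subst det_diagonal) (auto simp: diag_mat_def)
  ultimately show ?thesis by (simp add: det_mul)
qed

lemma trace_orthodiag:
  assumes "orthogonal_matrix Q"
  shows "trace (orthodiag Q lam) = (\<Sum>i\<in>UNIV. lam$i)"
proof -
  have "trace (orthodiag Q lam) = trace (transpose Q ** Q ** diag_mat lam)"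
    by (simp add: trace_mul_sym[of "Q ** diag_mat lam"] matrix_mul_assoc)
  also have "\<dots> = trace (diag_mat lam)"
    using assms by (simp add: orthogonal_matrix_def)
  finally show ?thesis by (simp add: trace_def diag_mat_def)
qed

text \<open>\<open>mat_fun\<close> may pick a different diagonalisation than the given one; positivity of the
  eigenvalues survives because the \<open>i\<close>-th eigenvalue for \<open>P\<close> is a convex combination, with
  weights \<open>overlap P Q i k\<close>, of the eigenvalues for \<open>Q\<close>.\<close>
lemma orthodiag_eigenvalue_pos:
  assumes Q: "orthogonal_matrix Q" and P: "orthogonal_matrix P"
    and eq: "orthodiag Q mu = orthodiag P lam" and mu: "\<And>k. mu$k > 0"
  shows "lam$i > 0"
proof -
  have "lam$i = (\<Sum>k\<in>UNIV. lam$k * overlap P P i k)"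
    using P by (simp add: overlap_self if_distrib cong: if_cong)
  also have "\<dots> = (\<Sum>k\<in>UNIV. mu$k * overlap P Q i k)"
    by (simp only: eq column_quadratic_form_orthodiag[symmetric])
  finally have lam: "lam$i = (\<Sum>k\<in>UNIV. mu$k * overlap P Q i k)" .
  obtain k where "overlap P Q i k \<noteq> 0"
    using sum_overlap_right[OF P Q, of i] by (metis (no_types) sum.neutral zero_neq_one)
  then have "0 < mu$k * overlap P Q i k"
    using mu[of k] overlap_nonneg[of P Q i k] by simp
  then have "0 < (\<Sum>k\<in>UNIV. mu$k * overlap P Q i k)"
    by (intro sum_pos2[of UNIV k]) (auto intro: mult_nonneg_nonneg less_imp_le mu overlap_nonneg)
  with lam show ?thesis by simp
qed

lemma trace_mat_fun_ln_orthodiag: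
  assumes P: "orthogonal_matrix P" and mu: "\<And>k. mu$k > 0"
  shows "trace (mat_fun ln (orthodiag P mu)) = (\<Sum>k\<in>UNIV. ln (mu$k))"
proof -
  obtain Q lam where Q: "orthogonal_matrix Q" and eq: "orthodiag P mu = orthodiag Q lam"
    and mf: "mat_fun ln (orthodiag P mu) = orthodiag Q (\<chi> i. ln (lam $ i))"
    using mat_fun_symmetric[OF transpose_orthodiag] by blast
  have lam: "lam$i > 0" for i using orthodiag_eigenvalue_pos[OF P Q eq mu] .
  have "trace (mat_fun ln (orthodiag P mu)) = ln (\<Prod>i\<in>UNIV. lam$i)"
    using lam by (simp add: mf trace_orthodiag[OF Q] ln_prod less_imp_neq[symmetric])
  also have "(\<Prod>i\<in>UNIV. lam$i) = (\<Prod>i\<in>UNIV. mu$i)"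
    using det_orthodiag[OF P, of mu] det_orthodiag[OF Q, of lam] eq by simp
  finally show ?thesis using mu by (simp add: ln_prod less_imp_neq[symmetric])
qed

section \<open>The edge inequality\<close>

lemma two_ln_le_diff_inverse:
  fixes t :: real
  assumes "t \<ge> 1"
  shows "2 * ln t \<le> t - 1 / t"
proof -
  let ?f = "\<lambda>x::real. x - 1 / x - 2 * ln x"
  have "?f 1 \<le> ?f t"
  proof (rule DERIV_nonneg_imp_nondecreasing[OF assms])
    fix x :: real assume x: "1 \<le> x" "x \<le> t"
    have "DERIV ?f x :> 1 + 1 / x\<^sup>2 - 2 / x"
      using x by (auto intro!: derivative_eq_intros simp: field_simps power2_eq_square)
    moreover have "1 + 1 / x\<^sup>2 - 2 / x = (1 - 1 / x)\<^sup>2"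
      using x by (simp add: field_simps power2_eq_square)
    ultimately show "\<exists>y. DERIV ?f x :> y \<and> y \<ge> 0" by auto
  qed
  then show ?thesis by simp
qed

text \<open>With \<open>t = \<surd>(a/b)\<close> this is \<open>(2 ln t)\<^sup>2 \<le> (t - 1/t)\<^sup>2\<close>.\<close>
lemma ln_diff_square_le:
  fixes a b :: real
  assumes "a > 0" "b > 0"
  shows "(ln a - ln b)\<^sup>2 \<le> (a - b)\<^sup>2 / (a * b)"
proof -
  have main: "(ln a - ln b)\<^sup>2 \<le> (a - b)\<^sup>2 / (a * b)" if "b \<le> a" "0 < b" for a b :: real
  proof -
    define t where "t = sqrt (a / b)"
    have t: "t \<ge> 1" "t * t = a / b" using that by (simp_all add: t_def)
    have "ln a - ln b = ln (t * t)" using that t by (simp add: ln_div)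
    also have "\<dots> = 2 * ln t" using t(1) by (simp add: ln_mult)
    finally have "ln a - ln b = 2 * ln t" .
    moreover have "(2 * ln t)\<^sup>2 \<le> (t - 1 / t)\<^sup>2"
      using t by (intro power_mono two_ln_le_diff_inverse) simp_all
    moreover have "(t - 1 / t)\<^sup>2 = (a - b)\<^sup>2 / (a * b)"
    proof -
      have "(t - 1 / t)\<^sup>2 = t * t + 1 / (t * t) - 2"
        using t(1) by (simp add: field_simps power2_eq_square)
      also have "\<dots> = (a - b)\<^sup>2 / (a * b)"
        using that by (simp add: t(2) field_simps power2_eq_square)
      finally show ?thesis .
    qed
    ultimately show ?thesis by simp
  qed
  show ?thesis
    using main[of b a] main[of a b] assms
    by (cases "b \<le> a") (simp_all add: power2_commute mult.commute)
qed

lemma beta_diff_square_le: "(beta \<delta> x - beta \<delta> y)\<^sup>2 \<le> (x - y) * (beta \<delta> x - beta \<delta> y)"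
  by (cases "x \<le> \<delta>"; cases "y \<le> \<delta>")
    (auto simp: beta_def max_def power2_eq_square intro: mult_right_mono mult_right_mono_neg)

lemma ln_beta_diff_square_le:
  assumes "\<delta> > 0"
  shows "(ln (beta \<delta> x) - ln (beta \<delta> y))\<^sup>2 \<le> - ((x - y) * (1 / beta \<delta> x - 1 / beta \<delta> y))"
proof -
  have pos: "beta \<delta> x > 0" "beta \<delta> y > 0" using assms by (auto simp: beta_def)
  have "(ln (beta \<delta> x) - ln (beta \<delta> y))\<^sup>2 \<le> (beta \<delta> x - beta \<delta> y)\<^sup>2 / (beta \<delta> x * beta \<delta> y)"
    using ln_diff_square_le[OF pos] .
  also have "\<dots> \<le> (x - y) * (beta \<delta> x - beta \<delta> y) / (beta \<delta> x * beta \<delta> y)"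
    using pos by (intro divide_right_mono beta_diff_square_le) simp
  also have "\<dots> = - ((x - y) * (1 / beta \<delta> x - 1 / beta \<delta> y))"
    using pos by (simp add: field_simps)
  finally show ?thesis .
qed

lemma weighted_square_mean_le:
  fixes w h g :: "'a \<Rightarrow> real"
  assumes w: "\<And>x. x \<in> S \<Longrightarrow> w x \<ge> 0" and hg: "\<And>x. x \<in> S \<Longrightarrow> (h x)\<^sup>2 \<le> g x"
  shows "(\<Sum>x\<in>S. w x * h x)\<^sup>2 \<le> (\<Sum>x\<in>S. w x) * (\<Sum>x\<in>S. w x * g x)"
proof -
  have "(\<Sum>x\<in>S. w x * h x) = (\<Sum>x\<in>S. sqrt (w x) * (sqrt (w x) * h x))"
    using w by (intro sum.cong) (auto simp flip: mult.assoc)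
  then have "(\<Sum>x\<in>S. w x * h x)\<^sup>2 \<le> (\<Sum>x\<in>S. (sqrt (w x))\<^sup>2) * (\<Sum>x\<in>S. (sqrt (w x) * h x)\<^sup>2)"
    by (metis Cauchy_Schwarz_ineq_sum)
  also have "\<dots> = (\<Sum>x\<in>S. w x) * (\<Sum>x\<in>S. w x * (h x)\<^sup>2)"
    using w by (simp add: power_mult_distrib)
  also have "\<dots> \<le> (\<Sum>x\<in>S. w x) * (\<Sum>x\<in>S. w x * g x)"
    using w hg by (intro mult_left_mono sum_mono mult_left_mono sum_nonneg) auto
  finally show ?thesis .
qed

lemma beta_pos: "\<delta> > 0 \<Longrightarrow> beta \<delta> t > 0"
  by (simp add: beta_def)

lemma mat_fun_beta_orthodiag:
  fixes B :: "real^'n^'n"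
  assumes sym: "transpose B = B" and \<delta>: "\<delta> > 0"
  obtains P lam where "orthogonal_matrix P" "B = orthodiag P lam"
    "mat_fun (beta \<delta>) B = orthodiag P (\<chi> i. beta \<delta> (lam$i))"
    "matrix_inv (mat_fun (beta \<delta>) B) = orthodiag P (\<chi> i. 1 / beta \<delta> (lam$i))"
    "trace (mat_fun ln (mat_fun (beta \<delta>) B)) = (\<Sum>k\<in>UNIV. ln (beta \<delta> (lam$k)))"
proof -
  obtain P lam where P: "orthogonal_matrix P" and B: "B = orthodiag P lam"
    and bB: "mat_fun (beta \<delta>) B = orthodiag P (\<chi> i. beta \<delta> (lam$i))"
    using mat_fun_symmetric[OF sym] by blast
  have pos: "beta \<delta> t > 0" "beta \<delta> t \<noteq> 0" for t using beta_pos[OF \<delta>, of t] by simp_all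
  show ?thesis
  proof (rule that[OF P B bB])
    show "matrix_inv (mat_fun (beta \<delta>) B) = orthodiag P (\<chi> i. 1 / beta \<delta> (lam$i))"
      unfolding bB by (subst matrix_inv_orthodiag[OF P]) (simp_all add: pos)
    show "trace (mat_fun ln (mat_fun (beta \<delta>) B)) = (\<Sum>k\<in>UNIV. ln (beta \<delta> (lam$k)))"
      unfolding bB by (subst trace_mat_fun_ln_orthodiag[OF P]) (simp_all add: pos)
  qed
qed

lemma trace_ln_inverse_beta:
  fixes B :: "real^'n^'n"
  assumes "transpose B = B" "\<delta> > 0"
  shows "trace (mat_fun ln (matrix_inv (mat_fun (beta \<delta>) B)))
       = - trace (mat_fun ln (mat_fun (beta \<delta>) B))"
proof -
  obtain P lam where P: "orthogonal_matrix P"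
    and inv: "matrix_inv (mat_fun (beta \<delta>) B) = orthodiag P (\<chi> i. 1 / beta \<delta> (lam$i))"
    and tr: "trace (mat_fun ln (mat_fun (beta \<delta>) B)) = (\<Sum>k\<in>UNIV. ln (beta \<delta> (lam$k)))"
    using mat_fun_beta_orthodiag[OF assms] by metis
  have pos: "beta \<delta> t > 0" "beta \<delta> t \<noteq> 0" for t using beta_pos[OF assms(2), of t] by simp_all
  show ?thesis
    unfolding inv tr
    by (subst trace_mat_fun_ln_orthodiag[OF P]) (simp_all add: pos ln_div sum_negf)
qed

text \<open>Diagonalising both matrices, each side becomes an average over the doubly stochastic weights \<open>overlap P Q\<close> of the scalar quantities,
  and Cauchy--Schwarz costs the factor \<open>d\<close>.\<close>
lemma trace_ln_beta_diff_square_le: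
  fixes B C :: "real^'n^'n"
  assumes sB: "transpose B = B" and sC: "transpose C = C" and \<delta>: "\<delta> > 0"
  shows "(trace (mat_fun ln (mat_fun (beta \<delta>) B)) - trace (mat_fun ln (mat_fun (beta \<delta>) C)))\<^sup>2
           / real CARD('n)
         \<le> - ((B - C) \<bullet> (matrix_inv (mat_fun (beta \<delta>) B) - matrix_inv (mat_fun (beta \<delta>) C)))"
proof -
  obtain P lam where P: "orthogonal_matrix P" and B: "B = orthodiag P lam"
    and iB: "matrix_inv (mat_fun (beta \<delta>) B) = orthodiag P (\<chi> i. 1 / beta \<delta> (lam$i))"
    and tB: "trace (mat_fun ln (mat_fun (beta \<delta>) B)) = (\<Sum>k\<in>UNIV. ln (beta \<delta> (lam$k)))"
    using mat_fun_beta_orthodiag[OF sB \<delta>] by metis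
  obtain Q mu where Q: "orthogonal_matrix Q" and C: "C = orthodiag Q mu"
    and iC: "matrix_inv (mat_fun (beta \<delta>) C) = orthodiag Q (\<chi> i. 1 / beta \<delta> (mu$i))"
    and tC: "trace (mat_fun ln (mat_fun (beta \<delta>) C)) = (\<Sum>k\<in>UNIV. ln (beta \<delta> (mu$k)))"
    using mat_fun_beta_orthodiag[OF sC \<delta>] by metis
  have pair_sum: "(\<Sum>x\<in>UNIV. f x) = (\<Sum>k\<in>UNIV. \<Sum>l\<in>UNIV. f (k, l))" for f :: "'n \<times> 'n \<Rightarrow> real"
    by (subst sum.cartesian_product) simp
  define w where "w = (\<lambda>(k, l). overlap P Q k l)"
  define h where "h = (\<lambda>(k, l). ln (beta \<delta> (lam$k)) - ln (beta \<delta> (mu$l)))"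
  define g where "g = (\<lambda>(k, l). - ((lam$k - mu$l) * (1 / beta \<delta> (lam$k) - 1 / beta \<delta> (mu$l))))"
  have "(\<Sum>x\<in>UNIV. w x * h x) = (\<Sum>k\<in>UNIV. ln (beta \<delta> (lam$k))) - (\<Sum>k\<in>UNIV. ln (beta \<delta> (mu$k)))"
    using sum_overlap_add[OF P Q, of "\<lambda>k. ln (beta \<delta> (lam$k))" "\<lambda>l. - ln (beta \<delta> (mu$l))"]
    by (simp add: pair_sum w_def h_def sum_negf)
  moreover have "(\<Sum>x\<in>UNIV. w x) = real CARD('n)"
    using sum_overlap_right[OF P Q] by (simp add: pair_sum w_def)
  moreover have "(\<Sum>x\<in>UNIV. w x * g x)
      = - ((B - C) \<bullet> (matrix_inv (mat_fun (beta \<delta>) B) - matrix_inv (mat_fun (beta \<delta>) C)))"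
    unfolding iB iC unfolding B C neg_inner_diff_orthodiag[OF P Q]
    by (simp add: pair_sum w_def g_def)
  moreover have "(\<Sum>x\<in>UNIV. w x * h x)\<^sup>2 \<le> (\<Sum>x\<in>UNIV. w x) * (\<Sum>x\<in>UNIV. w x * g x)"
    using ln_beta_diff_square_le[OF \<delta>]
    by (intro weighted_square_mean_le) (auto simp: w_def h_def g_def overlap_nonneg)
  ultimately show ?thesis
    unfolding tB tC by (simp add: divide_le_eq mult.commute)
qed


section \<open>Barycentric coordinates\<close>

lemma independent_dual_vectors:
  fixes B :: "'a::euclidean_space set"
  assumes "independent B"
  shows "\<exists>w. \<forall>b\<in>B. \<forall>c\<in>B. w b \<bullet> c = (if b = c then 1 else 0)"
proof -
  have "\<exists>wb. \<forall>c\<in>B. wb \<bullet> c = (if b = c then 1 else 0)" for b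
  proof -
    obtain g where g: "linear g" "\<forall>x\<in>B. g x = (if b = x then 1 else (0::real))"
      using linear_independent_extend[OF assms, of "\<lambda>x. if b = x then 1 else (0::real)"] by blast
    have "adjoint g 1 \<bullet> c = g c" for c
      using adjoint_works[OF g(1), of c 1] by (simp add: inner_commute)
    with g(2) show ?thesis by (intro exI[of _ "adjoint g 1"]) simp
  qed
  then have "\<forall>b. \<exists>wb. \<forall>c\<in>B. wb \<bullet> c = (if b = c then 1 else 0)" ..
  from choice[OF this] show ?thesis by blast
qed

lemma dual_family_expansion:
  fixes e w :: "'i \<Rightarrow> 'a::real_inner"
  assumes J: "finite J" and w: "\<forall>l\<in>J. \<forall>m\<in>J. w l \<bullet> e m = (if l = m then 1 else 0)"
    and y: "y \<in> span (e ` J)"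
  shows "(\<Sum>l\<in>J. (w l \<bullet> y) *\<^sub>R e l) = y"
proof -
  have "subspace {y. (\<Sum>l\<in>J. (w l \<bullet> y) *\<^sub>R e l) = y}"
    unfolding subspace_def
  proof (intro conjI ballI allI; clarsimp)
    fix c :: real and x assume "(\<Sum>l\<in>J. (w l \<bullet> x) *\<^sub>R e l) = x"
    then show "(\<Sum>l\<in>J. (c * (w l \<bullet> x)) *\<^sub>R e l) = c *\<^sub>R x"
      by (metis (no_types, lifting) scaleR_scaleR scaleR_sum_right sum.cong)
  qed (simp_all add: inner_add_right scaleR_add_left sum.distrib)
  moreover have "(\<Sum>l\<in>J. (w l \<bullet> e m) *\<^sub>R e l) = e m" if "m \<in> J" for m
    using w that J by (simp add: if_distrib[of "\<lambda>c. c *\<^sub>R _"] cong: if_cong)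
  ultimately show ?thesis
    using span_induct[OF y, of "\<lambda>y. (\<Sum>l\<in>J. (w l \<bullet> y) *\<^sub>R e l) = y"] by blast
qed

lemma simplex_edges_basis:
  fixes v :: "nat \<Rightarrow> real^'n"
  assumes inj: "inj_on v {0..CARD('n)}" and ind: "\<not> affine_dependent (v ` {0..CARD('n)})"
  shows "independent ((\<lambda>l. v l - v 0) ` {1..CARD('n)})"
    and "inj_on (\<lambda>l. v l - v 0) {1..CARD('n)}"
    and "span ((\<lambda>l. v l - v 0) ` {1..CARD('n)}) = UNIV"
proof -
  let ?E = "(\<lambda>l. v l - v 0) ` {1..CARD('n)}"
  have "v 0 \<notin> v ` {1..CARD('n)}"
    using inj_onD[OF inj] by fastforce
  moreover have "{0..CARD('n)} = insert 0 {1..CARD('n)}" by auto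
  moreover have "(\<lambda>x. - v 0 + x) ` v ` {1..CARD('n)} = ?E" by (auto simp: image_image)
  ultimately show indE: "independent ?E"
    using ind affine_dependent_iff_dependent[of "v 0" "v ` {1..CARD('n)}"] by simp
  show injE: "inj_on (\<lambda>l. v l - v 0) {1..CARD('n)}"
    using inj by (auto simp: inj_on_def)
  have "card ?E = DIM(real^'n)" using card_image[OF injE] by simp
  then show "span ?E = UNIV"
    using indep_card_eq_dim_span[OF indE] dim_eq_full[of "span ?E"] by (simp only: span_span)
qed

lemma simplex_edges_orthogonal_eq_0:
  fixes v :: "nat \<Rightarrow> real^'n"
  assumes inj: "inj_on v {0..CARD('n)}" and ind: "\<not> affine_dependent (v ` {0..CARD('n)})"
    and k: "k \<in> {0..CARD('n)}" and z: "\<And>l. l \<in> {0..CARD('n)} \<Longrightarrow> z \<bullet> (v l - v k) = 0"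
  shows "z = 0"
proof -
  have "orthogonal z e" if e: "e \<in> (\<lambda>l. v l - v 0) ` {1..CARD('n)}" for e
  proof -
    obtain l where l: "l \<in> {1..CARD('n)}" "e = v l - v 0" using e by auto
    then have "e = (v l - v k) - (v 0 - v k)" by simp
    with l show ?thesis using z[of l] z[of 0] by (simp add: orthogonal_def inner_diff_right)
  qed
  then have "orthogonal z z"
    using orthogonal_to_span simplex_edges_basis(3)[OF inj ind] by blast
  then show ?thesis by (simp add: orthogonal_def)
qed

text \<open>\<open>W i\<close> is the gradient of the \<open>i\<close>-th barycentric coordinate, i.e.\ of the affine function
  taking the value \<open>1\<close> at \<open>v i\<close> and \<open>0\<close> at the other vertices.\<close>
definition bary_gradients :: "(nat \<Rightarrow> real^'n) \<Rightarrow> (nat \<Rightarrow> real^'n) \<Rightarrow> bool" where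
  "bary_gradients v W \<longleftrightarrow> (\<forall>i\<in>{0..CARD('n)}. \<forall>m\<in>{0..CARD('n)}.
     W i \<bullet> (v m - v 0) = (if i = m then 1 else 0) - (if i = 0 then 1 else 0))"

lemma bary_gradients_inner_diff:
  fixes v W :: "nat \<Rightarrow> real^'n"
  assumes "bary_gradients v W" "i \<in> {0..CARD('n)}" "m \<in> {0..CARD('n)}" "k \<in> {0..CARD('n)}"
  shows "W i \<bullet> (v m - v k) = (if i = m then 1 else 0) - (if i = k then 1 else 0)"
proof -
  have "W i \<bullet> (v m - v k) = W i \<bullet> (v m - v 0) - W i \<bullet> (v k - v 0)"
    by (simp add: inner_diff_right)
  then show ?thesis using assms by (simp add: bary_gradients_def)
qed

lemma bary_gradients_exist:
  fixes v :: "nat \<Rightarrow> real^'n"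
  assumes inj: "inj_on v {0..CARD('n)}" and ind: "\<not> affine_dependent (v ` {0..CARD('n)})"
  obtains W where "bary_gradients v W"
proof -
  let ?J = "{1..CARD('n)}" and ?e = "\<lambda>l. v l - v 0"
  note E = simplex_edges_basis[OF inj ind]
  obtain w where w: "\<forall>b\<in>?e ` ?J. \<forall>c\<in>?e ` ?J. w b \<bullet> c = (if b = c then 1 else 0)"
    using independent_dual_vectors[OF E(1)] by blast
  have wJ: "w (?e l) \<bullet> ?e m = (if l = m then 1 else 0)" if "l \<in> ?J" "m \<in> ?J" for l m
    using w that inj_onD[OF E(2)] by fastforce
  define W where "W i = (if i = 0 then - (\<Sum>l\<in>?J. w (?e l)) else w (?e i))" for i
  have "bary_gradients v W"
    unfolding bary_gradients_def
  proof (intro ballI)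
    fix i m assume "i \<in> {0..CARD('n)}" "m \<in> {0..CARD('n)}"
    then consider "m = 0" | "m \<in> ?J" "i = 0" | "m \<in> ?J" "i \<in> ?J" by fastforce
    then show "W i \<bullet> ?e m = (if i = m then 1 else 0) - (if i = 0 then 1 else 0)"
    proof cases
      case 2
      then have "W i \<bullet> ?e m = - (\<Sum>l\<in>?J. if l = m then 1 else 0)"
        by (simp add: W_def inner_sum_left wJ)
      with 2 show ?thesis by simp
    qed (auto simp: W_def wJ)
  qed
  then show ?thesis by (rule that)
qed

lemma bary_gradients_sum:
  fixes v W :: "nat \<Rightarrow> real^'n"
  assumes inj: "inj_on v {0..CARD('n)}" and ind: "\<not> affine_dependent (v ` {0..CARD('n)})"
    and W: "bary_gradients v W"
  shows "(\<Sum>i\<in>{0..CARD('n)}. W i) = 0"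
proof (rule simplex_edges_orthogonal_eq_0[OF inj ind])
  fix m assume m: "m \<in> {0..CARD('n)}"
  have "(\<Sum>i\<in>{0..CARD('n)}. W i) \<bullet> (v m - v 0)
      = (\<Sum>i\<in>{0..CARD('n)}. (if i = m then 1 else 0) - (if i = 0 then 1 else 0))"
    using W m by (simp add: inner_sum_left bary_gradients_def)
  also have "\<dots> = 0" using m by (simp add: sum_subtractf)
  finally show "(\<Sum>i\<in>{0..CARD('n)}. W i) \<bullet> (v m - v 0) = 0" .
qed simp



lemma bary_gradients_coordinate:
  fixes v W :: "nat \<Rightarrow> real^'n"
  assumes W: "bary_gradients v W" and m: "m \<in> {0..CARD('n)}"
    and u: "sum u {0..CARD('n)} = 1" "(\<Sum>i\<in>{0..CARD('n)}. u i *\<^sub>R v i) = x"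
  shows "u m = W m \<bullet> (x - v 0) + (if m = 0 then 1 else 0)"
proof -
  let ?I = "{0..CARD('n)}"
  have "x - v 0 = (\<Sum>i\<in>?I. u i *\<^sub>R (v i - v 0))"
    using u by (simp add: scaleR_diff_right sum_subtractf flip: scaleR_sum_left)
  then have "W m \<bullet> (x - v 0) = (\<Sum>i\<in>?I. u i * ((if m = i then 1 else 0) - (if m = 0 then 1 else 0)))"
    using W m by (simp add: inner_sum_right bary_gradients_def)
  also have "\<dots> = (\<Sum>i\<in>?I. (if i = m then u m else 0) - u i * (if m = 0 then 1 else 0))"
    by (intro sum.cong) auto
  also have "\<dots> = u m - (if m = 0 then 1 else 0)"
    using m u(1) by (simp add: sum_subtractf flip: sum_distrib_right)
  finally show ?thesis by simp
qed

lemma bary_gradients_affine_combination: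
  fixes v W :: "nat \<Rightarrow> real^'n"
  assumes inj: "inj_on v {0..CARD('n)}" and ind: "\<not> affine_dependent (v ` {0..CARD('n)})"
    and W: "bary_gradients v W"
  shows "(\<Sum>i\<in>{0..CARD('n)}. W i \<bullet> (x - v 0) + (if i = 0 then 1 else 0)) = 1"
    and "(\<Sum>i\<in>{0..CARD('n)}. (W i \<bullet> (x - v 0) + (if i = 0 then 1 else 0)) *\<^sub>R v i) = x"
proof -
  let ?I = "{0..CARD('n)}" and ?J = "{1..CARD('n)}"
  define u where "u i = W i \<bullet> (x - v 0) + (if i = 0 then 1 else 0)" for i
  have I: "?I = insert 0 ?J" by auto
  show sum_u: "(\<Sum>i\<in>?I. u i) = 1"
    using bary_gradients_sum[OF inj ind W]
    by (simp add: u_def sum.distrib flip: inner_sum_left)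
  have "(\<Sum>l\<in>?J. (W l \<bullet> (x - v 0)) *\<^sub>R (v l - v 0)) = x - v 0"
    using W simplex_edges_basis(3)[OF inj ind]
    by (intro dual_family_expansion) (auto simp: bary_gradients_def)
  then have "(\<Sum>i\<in>?I. u i *\<^sub>R (v i - v 0)) = x - v 0"
    by (simp add: I u_def)
  with sum_u show "(\<Sum>i\<in>?I. u i *\<^sub>R v i) = x" by (simp add: scaleR_diff_right sum_subtractf flip: scaleR_sum_left)
qed

lemma bary_eq:
  fixes v W :: "nat \<Rightarrow> real^'n"
  assumes inj: "inj_on v {0..CARD('n)}" and ind: "\<not> affine_dependent (v ` {0..CARD('n)})"
    and W: "bary_gradients v W"
  shows "bary v x i =
    (if i \<in> {0..CARD('n)} then W i \<bullet> (x - v 0) + (if i = 0 then 1 else 0) else 0)"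
proof -
  define u where "u i = (if i \<in> {0..CARD('n)} then W i \<bullet> (x - v 0) + (if i = 0 then 1 else 0) else 0)"
    for i
  have "bary v x = u"
    unfolding bary_def
  proof (rule the_equality)
    have "(\<Sum>i\<in>{0..CARD('n)}. u i *\<^sub>R v i) = x" "sum u {0..CARD('n)} = 1"
      using bary_gradients_affine_combination[OF inj ind W, of x] by (simp_all add: u_def)
    then show "(\<forall>i. CARD('n) < i \<longrightarrow> u i = 0) \<and> sum u {0..CARD('n)} = 1
        \<and> (\<Sum>i = 0..CARD('n). u i *\<^sub>R v i) = x"
      by (simp add: u_def)
  next
    fix u' assume "(\<forall>i. CARD('n) < i \<longrightarrow> u' i = 0) \<and> sum u' {0..CARD('n)} = 1
        \<and> (\<Sum>i = 0..CARD('n). u' i *\<^sub>R v i) = x"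
    then show "u' = u"
      using bary_gradients_coordinate[OF W, of _ u'] by (intro ext) (auto simp: u_def not_le)
  qed
  then show ?thesis by (simp add: u_def)
qed

lemma pd_p1_interp:
  fixes v W :: "nat \<Rightarrow> real^'n" and g :: "nat \<Rightarrow> 'b::real_normed_vector"
  assumes inj: "inj_on v {0..CARD('n)}" and ind: "\<not> affine_dependent (v ` {0..CARD('n)})"
    and W: "bary_gradients v W"
  shows "pd (p1_interp v g) x k = (\<Sum>i\<in>{0..CARD('n)}. (W i $ k) *\<^sub>R g i)"
proof -
  let ?I = "{0..CARD('n)}"
  have p1: "p1_interp v g = (\<lambda>x. \<Sum>i\<in>?I. (W i \<bullet> (x - v 0) + (if i = 0 then 1 else 0)) *\<^sub>R g i)"
    unfolding p1_interp_def by (intro ext sum.cong) (auto simp: bary_eq[OF inj ind W])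
  have "((\<lambda>x. \<Sum>i\<in>?I. (W i \<bullet> (x - v 0) + (if i = 0 then 1 else 0)) *\<^sub>R g i)
      has_derivative (\<lambda>h. \<Sum>i\<in>?I. (W i \<bullet> h) *\<^sub>R g i)) (at x)"
    by (auto intro!: derivative_eq_intros)
  from frechet_derivative_at[OF this]
  have "frechet_derivative (p1_interp v g) (at x) = (\<lambda>h. \<Sum>i\<in>?I. (W i \<bullet> h) *\<^sub>R g i)"
    by (simp add: p1)
  then show ?thesis by (simp add: pd_def inner_axis)
qed

lemma p1_interp_gradient_inner:
  fixes v W :: "nat \<Rightarrow> real^'n" and f g :: "nat \<Rightarrow> 'b::real_inner"
  assumes inj: "inj_on v {0..CARD('n)}" and ind: "\<not> affine_dependent (v ` {0..CARD('n)})"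
    and W: "bary_gradients v W"
  shows "(\<Sum>k\<in>UNIV. pd (p1_interp v f) x k \<bullet> pd (p1_interp v g) x k)
    = (\<Sum>i\<in>{0..CARD('n)}. \<Sum>j\<in>{0..CARD('n)}. (W i \<bullet> W j) * (f i \<bullet> g j))"
proof -
  let ?I = "{0..CARD('n)}"
  have "(\<Sum>k\<in>UNIV. pd (p1_interp v f) x k \<bullet> pd (p1_interp v g) x k)
      = (\<Sum>k\<in>UNIV. \<Sum>j\<in>?I. \<Sum>i\<in>?I. (W i $ k * W j $ k) * (f i \<bullet> g j))"
    by (simp add: pd_p1_interp[OF inj ind W] inner_sum_left inner_sum_right sum_distrib_left)
      (simp add: mult_ac)
  also have "\<dots> = (\<Sum>j\<in>?I. \<Sum>i\<in>?I. \<Sum>k\<in>UNIV. (W i $ k * W j $ k) * (f i \<bullet> g j))"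
    by (rule sum_swap3[symmetric])
  also have "\<dots> = (\<Sum>j\<in>?I. \<Sum>i\<in>?I. (W i \<bullet> W j) * (f i \<bullet> g j))"
    by (simp add: inner_vec_def sum_distrib_right)
  also have "\<dots> = (\<Sum>i\<in>?I. \<Sum>j\<in>?I. (W i \<bullet> W j) * (f i \<bullet> g j))"
    by (rule sum.swap)
  finally show ?thesis .
qed


section \<open>Non-obtuse simplices\<close>

lemma closest_point_subspace_orthogonal:
  fixes S :: "'a::euclidean_space set"
  assumes S: "subspace S" and y: "y \<in> S"
  shows "(z - closest_point S z) \<bullet> y = 0"
proof -
  let ?p = "closest_point S z"
  have S': "closed S" "convex S" "S \<noteq> {}"
    using S closed_subspace subspace_imp_convex subspace_0 by auto
  then have p: "?p \<in> S" by (intro closest_point_in_set)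
  have "?p + y \<in> S" "?p - y \<in> S" using p y S by (auto intro: subspace_add subspace_diff)
  then have "(z - ?p) \<bullet> (?p + y - ?p) \<le> 0" "(z - ?p) \<bullet> (?p - y - ?p) \<le> 0"
    using closest_point_dot[OF S'(2,1)] by blast+
  then show ?thesis by simp
qed

lemma inner_nonneg_if_arccos_le:
  fixes a b :: "'a::real_inner"
  assumes "a \<noteq> 0" "b \<noteq> 0" "arccos ((a \<bullet> b) / (norm a * norm b)) \<le> pi / 2"
  shows "a \<bullet> b \<ge> 0"
proof (rule ccontr)
  assume "\<not> a \<bullet> b \<ge> 0"
  moreover have "\<bar>a \<bullet> b\<bar> \<le> norm a * norm b" by (rule Cauchy_Schwarz_ineq2)
  moreover have "norm a * norm b > 0" using assms by simp
  ultimately have "arccos 0 < arccos ((a \<bullet> b) / (norm a * norm b))"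
    by (intro arccos_less_arccos) (auto simp: divide_neg_pos abs_le_iff field_simps)
  with assms(3) show False by simp
qed

text \<open>Let \<open>p\<close>, \<open>q\<close> be the dual vectors of \<open>a\<close>, \<open>b\<close> in the orthogonal complement of \<open>S\<close>.
  Writing \<open>b = (a \<bullet> b) p + (b \<bullet> b) q\<close> and pairing with \<open>p\<close> gives
  \<open>(b \<bullet> b) (p \<bullet> q) = - (a \<bullet> b) (p \<bullet> p)\<close>.\<close>
lemma dual_pair_inner_nonpos:
  fixes a b p q :: "'a::real_inner"
  assumes span: "\<And>z. \<forall>y\<in>S. z \<bullet> y = 0 \<Longrightarrow> z \<bullet> a = 0 \<Longrightarrow> z \<bullet> b = 0 \<Longrightarrow> z = 0"
    and orth: "\<forall>y\<in>S. b \<bullet> y = 0" "\<forall>y\<in>S. p \<bullet> y = 0" "\<forall>y\<in>S. q \<bullet> y = 0"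
    and dual: "p \<bullet> a = 1" "p \<bullet> b = 0" "q \<bullet> a = 0" "q \<bullet> b = 1"
    and ab: "a \<bullet> b \<ge> 0"
  shows "p \<bullet> q \<le> 0"
proof -
  define c d where "c = a \<bullet> b" and "d = b \<bullet> b"
  have "b - c *\<^sub>R p - d *\<^sub>R q = 0"
  proof (rule span)
    show "\<forall>y\<in>S. (b - c *\<^sub>R p - d *\<^sub>R q) \<bullet> y = 0"
      using orth by (simp add: inner_diff_left)
    show "(b - c *\<^sub>R p - d *\<^sub>R q) \<bullet> a = 0"
      using dual by (simp add: inner_diff_left c_def inner_commute[of b a])
    show "(b - c *\<^sub>R p - d *\<^sub>R q) \<bullet> b = 0"
      using dual by (simp add: inner_diff_left d_def)
  qed
  then have "p \<bullet> b = p \<bullet> (c *\<^sub>R p + d *\<^sub>R q)" by (simp add: algebra_simps)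
  then have "d * (p \<bullet> q) = - c * (p \<bullet> p)"
    using dual(2) by (simp add: inner_add_right)
  moreover have "c * (p \<bullet> p) \<ge> 0" using ab by (simp add: c_def)
  ultimately have "d * (p \<bullet> q) \<le> 0" by simp
  moreover have "d > 0" using dual(4) by (auto simp: d_def)
  ultimately show ?thesis by (simp add: mult_le_0_iff)
qed


text \<open>The gradients \<open>W i\<close>, \<open>W j\<close> are orthogonal to the ridge opposite to \<open>v i\<close>, \<open>v j\<close>
  and dual to the two vectors \<open>wi\<close>, \<open>wj\<close> whose angle is the dihedral angle.\<close>
lemma bary_gradients_inner_nonpos:
  fixes v W :: "nat \<Rightarrow> real^'n"
  assumes inj: "inj_on v {0..CARD('n)}" and ind: "\<not> affine_dependent (v ` {0..CARD('n)})"
    and d: "CARD('n) \<ge> 2" and nonobtuse: "nonobtuse_simplex v" and W: "bary_gradients v W"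
    and i: "i \<in> {0..CARD('n)}" and j: "j \<in> {0..CARD('n)}" and ij: "i \<noteq> j"
  shows "W i \<bullet> W j \<le> 0"
proof -
  let ?I = "{0..CARD('n)}"
  define R where "R = ?I - {i, j}"
  define k where "k = Min R"
  define S where "S = span ((\<lambda>l. v l - v k) ` R)"
  define wi where "wi = (v i - v k) - closest_point S (v i - v k)"
  define wj where "wj = (v j - v k) - closest_point S (v j - v k)"
  have "R \<noteq> {}"
  proof
    assume "R = {}"
    then have "card ?I \<le> card {i, j}" by (intro card_mono) (auto simp: R_def)
    with d ij show False by simp
  qed
  then have k: "k \<in> ?I" "k \<noteq> i" "k \<noteq> j" using Min_in[of R] by (auto simp: k_def R_def)
  have S: "subspace S" by (simp add: S_def)
  have cS: "closest_point S y \<in> S" for y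
    using S closed_subspace subspace_0 by (intro closest_point_in_set) auto
  have WS: "\<forall>y\<in>S. W a \<bullet> y = 0" if "a \<in> {i, j}" for a
  proof -
    have "orthogonal (W a) (v l - v k)" if "l \<in> R" for l
    proof -
      have "l \<in> ?I" "l \<noteq> a" "k \<noteq> a" "a \<in> ?I" using that \<open>a \<in> {i, j}\<close> i j k by (auto simp: R_def)
      then show ?thesis using bary_gradients_inner_diff[OF W, of a l k] k by (simp add: orthogonal_def)
    qed
    then show ?thesis using orthogonal_to_span[of _ "(\<lambda>l. v l - v k) ` R"]
      by (auto simp: S_def orthogonal_def)
  qed
  have wS: "\<forall>y\<in>S. wi \<bullet> y = 0" "\<forall>y\<in>S. wj \<bullet> y = 0"
    using closest_point_subspace_orthogonal[OF S] by (auto simp: wi_def wj_def)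
  have dual: "W i \<bullet> wi = 1" "W i \<bullet> wj = 0" "W j \<bullet> wi = 0" "W j \<bullet> wj = 1"
    using WS cS bary_gradients_inner_diff[OF W] i j k ij
    by (auto simp: wi_def wj_def inner_diff_right)
  have span: "z = 0" if z: "\<forall>y\<in>S. z \<bullet> y = 0" "z \<bullet> wi = 0" "z \<bullet> wj = 0" for z
  proof (rule simplex_edges_orthogonal_eq_0[OF inj ind k(1)])
    fix l assume l: "l \<in> ?I"
    then consider "l \<in> R" | "l = i" | "l = j" by (auto simp: R_def)
    then show "z \<bullet> (v l - v k) = 0"
    proof cases
      case 1
      then show ?thesis using z(1) by (simp add: S_def span_base)
    next
      case 2
      then have "v l - v k = wi + closest_point S (v i - v k)" by (simp add: wi_def)
      then show ?thesis using z cS by (simp add: inner_add_right)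
    next
      case 3
      then have "v l - v k = wj + closest_point S (v j - v k)" by (simp add: wj_def)
      then show ?thesis using z cS by (simp add: inner_add_right)
    qed
  qed
  have "dihedral_angle v i j = arccos ((wi \<bullet> wj) / (norm wi * norm wj))"
    unfolding dihedral_angle_def Let_def R_def k_def S_def wi_def wj_def ..
  moreover have "dihedral_angle v i j \<le> pi / 2"
    using nonobtuse i j ij by (simp add: nonobtuse_simplex_def)
  moreover have "wi \<noteq> 0" "wj \<noteq> 0" using dual by auto
  ultimately have "wi \<bullet> wj \<ge> 0" by (intro inner_nonneg_if_arccos_le) simp_all
  moreover have "\<forall>y\<in>S. W i \<bullet> y = 0" "\<forall>y\<in>S. W j \<bullet> y = 0" using WS by simp_all
  ultimately show ?thesis by (intro dual_pair_inner_nonpos[OF span wS(2) _ _ dual])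
qed


section \<open>Stiffness forms as sums over edges\<close>

lemma symmetric_zero_row_sums_form:
  fixes G h :: "nat \<Rightarrow> nat \<Rightarrow> real"
  assumes sym: "\<And>i j. G i j = G j i" and rows: "\<And>i. i \<in> I \<Longrightarrow> (\<Sum>j\<in>I. G i j) = 0"
  shows "(\<Sum>i\<in>I. \<Sum>j\<in>I. G i j * (h i i - h i j - h j i + h j j))
       = -2 * (\<Sum>i\<in>I. \<Sum>j\<in>I. G i j * h i j)"
proof -
  have diag1: "(\<Sum>i\<in>I. \<Sum>j\<in>I. G i j * h i i) = 0"
    using rows by (simp flip: sum_distrib_right)
  have "(\<Sum>i\<in>I. \<Sum>j\<in>I. G i j * h j j) = (\<Sum>j\<in>I. \<Sum>i\<in>I. G j i * h j j)"
    by (subst sum.swap) (simp add: sym)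
  then have diag2: "(\<Sum>i\<in>I. \<Sum>j\<in>I. G i j * h j j) = 0"
    using rows by (simp flip: sum_distrib_right)
  have "(\<Sum>i\<in>I. \<Sum>j\<in>I. G i j * h j i) = (\<Sum>j\<in>I. \<Sum>i\<in>I. G j i * h j i)"
    by (subst sum.swap) (simp add: sym)
  then have cross: "(\<Sum>i\<in>I. \<Sum>j\<in>I. G i j * h j i) = (\<Sum>i\<in>I. \<Sum>j\<in>I. G i j * h i j)"
    by simp
  have "(\<Sum>i\<in>I. \<Sum>j\<in>I. G i j * (h i i - h i j - h j i + h j j))
      = (\<Sum>i\<in>I. \<Sum>j\<in>I. G i j * h i i) - (\<Sum>i\<in>I. \<Sum>j\<in>I. G i j * h i j)
        - (\<Sum>i\<in>I. \<Sum>j\<in>I. G i j * h j i) + (\<Sum>i\<in>I. \<Sum>j\<in>I. G i j * h j j)"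
    by (simp add: algebra_simps sum.distrib sum_subtractf)
  then show ?thesis using diag1 diag2 cross by simp
qed

text \<open>For a matrix \<open>G\<close> with zero row sums and nonpositive off-diagonal entries (such as the
  stiffness matrix of a non-obtuse simplex) the bilinear forms are sums over edges,
  \<open>\<Sum>\<Sum> G i j h i j = - 1/2 \<Sum>\<Sum> G i j (h i i - h i j - h j i + h j j)\<close>, so an edgewise
  inequality carries over.\<close>
lemma zero_row_sums_form_le:
  fixes G :: "nat \<Rightarrow> nat \<Rightarrow> real" and f g :: "nat \<Rightarrow> 'a::real_inner" and t :: "nat \<Rightarrow> real"
  assumes sym: "\<And>i j. G i j = G j i" and rows: "\<And>i. i \<in> I \<Longrightarrow> (\<Sum>j\<in>I. G i j) = 0"
    and nonpos: "\<And>i j. i \<in> I \<Longrightarrow> j \<in> I \<Longrightarrow> i \<noteq> j \<Longrightarrow> G i j \<le> 0"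
    and edge: "\<And>i j. i \<in> I \<Longrightarrow> j \<in> I \<Longrightarrow> i \<noteq> j \<Longrightarrow>
                 c * (t i - t j)\<^sup>2 \<le> - ((f i - f j) \<bullet> (g i - g j))"
  shows "c * (\<Sum>i\<in>I. \<Sum>j\<in>I. G i j * (t i * t j)) \<le> - (\<Sum>i\<in>I. \<Sum>j\<in>I. G i j * (f i \<bullet> g j))"
proof -
  let ?X = "\<Sum>i\<in>I. \<Sum>j\<in>I. G i j * (f i \<bullet> g j)" and ?Y = "\<Sum>i\<in>I. \<Sum>j\<in>I. G i j * (t i * t j)"
  have "0 \<le> (\<Sum>i\<in>I. \<Sum>j\<in>I. G i j * (c * (t i - t j)\<^sup>2 + (f i - f j) \<bullet> (g i - g j)))"
  proof (intro sum_nonneg)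
    fix i j assume ij: "i \<in> I" "j \<in> I"
    show "0 \<le> G i j * (c * (t i - t j)\<^sup>2 + (f i - f j) \<bullet> (g i - g j))"
    proof (cases "i = j")
      case False
      then show ?thesis
        using nonpos[OF ij False] edge[OF ij False] by (intro mult_nonpos_nonpos) simp_all
    qed simp
  qed
  also have "\<dots> = c * (\<Sum>i\<in>I. \<Sum>j\<in>I. G i j * (t i - t j)\<^sup>2)
        + (\<Sum>i\<in>I. \<Sum>j\<in>I. G i j * ((f i - f j) \<bullet> (g i - g j)))"
    by (simp add: distrib_left sum.distrib sum_distrib_left mult_ac)
  also have "(\<Sum>i\<in>I. \<Sum>j\<in>I. G i j * (t i - t j)\<^sup>2) = -2 * ?Y"
    using symmetric_zero_row_sums_form[OF sym rows, of "\<lambda>i j. t i * t j"]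
    by (simp add: power2_eq_square algebra_simps)
  also have "(\<Sum>i\<in>I. \<Sum>j\<in>I. G i j * ((f i - f j) \<bullet> (g i - g j))) = -2 * ?X"
    using symmetric_zero_row_sums_form[OF sym rows, of "\<lambda>i j. f i \<bullet> g j"]
    by (simp add: inner_diff_left inner_diff_right algebra_simps)
  finally have "0 \<le> c * (-2 * ?Y) + -2 * ?X" .
  then show ?thesis by linarith
qed

lemma integral_const_real: "integral S (\<lambda>x. c) = c * integral S (\<lambda>x. 1 :: real)"
  using integral_cmul[of S c "\<lambda>x. 1 :: real"] by simp

lemma integral_one_nonneg: "integral S (\<lambda>x. 1 :: real) \<ge> 0"
  by (cases "(\<lambda>x. 1 :: real) integrable_on S") (auto intro: integral_nonneg simp: not_integrable_integral)


lemma nonobtuse_stiffness_form_le: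
  fixes v W :: "nat \<Rightarrow> real^'n" and B :: "nat \<Rightarrow> real^'n^'n"
  assumes inj: "inj_on v {0..CARD('n)}" and ind: "\<not> affine_dependent (v ` {0..CARD('n)})"
    and d: "CARD('n) \<ge> 2" and nonobtuse: "nonobtuse_simplex v" and W: "bary_gradients v W"
    and sym: "\<forall>i \<le> CARD('n). transpose (B i) = B i" and \<delta>: "\<delta> > 0"
  shows "1 / real CARD('n) * (\<Sum>i\<in>{0..CARD('n)}. \<Sum>j\<in>{0..CARD('n)}. (W i \<bullet> W j) *
           (trace (mat_fun ln (mat_fun (beta \<delta>) (B i))) * trace (mat_fun ln (mat_fun (beta \<delta>) (B j)))))
    \<le> - (\<Sum>i\<in>{0..CARD('n)}. \<Sum>j\<in>{0..CARD('n)}. (W i \<bullet> W j) *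
           (B i \<bullet> matrix_inv (mat_fun (beta \<delta>) (B j))))"
proof (rule zero_row_sums_form_le)
  show "(\<Sum>j\<in>{0..CARD('n)}. W i \<bullet> W j) = 0" for i
    by (simp add: bary_gradients_sum[OF inj ind W] flip: inner_sum_right)
  show "W i \<bullet> W j \<le> 0" if "i \<in> {0..CARD('n)}" "j \<in> {0..CARD('n)}" "i \<noteq> j" for i j
    using bary_gradients_inner_nonpos[OF inj ind d nonobtuse W] that by blast
  show "1 / real CARD('n) * (trace (mat_fun ln (mat_fun (beta \<delta>) (B i)))
          - trace (mat_fun ln (mat_fun (beta \<delta>) (B j))))\<^sup>2
        \<le> - ((B i - B j) \<bullet> (matrix_inv (mat_fun (beta \<delta>) (B i)) - matrix_inv (mat_fun (beta \<delta>) (B j))))"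
    if "i \<in> {0..CARD('n)}" "j \<in> {0..CARD('n)}" for i j
    using trace_ln_beta_diff_square_le[of "B i" "B j" \<delta>] sym \<delta> that by simp
qed (simp add: inner_commute)

theorem lemma2p4:
  fixes v :: "nat \<Rightarrow> real^'n" and Bv :: "nat \<Rightarrow> real^'n^'n" and \<delta> :: real
  assumes "CARD('n) \<in> {2, 3}"
    and "0 < \<delta>" and "\<delta> < 1"
    and "inj_on v {0..CARD('n)}"
    and "\<not> affine_dependent (v ` {0..CARD('n)})"
    and "nonobtuse_simplex v"
    and "\<forall>i \<le> CARD('n). transpose (Bv i) = Bv i"
  shows "- integral (simplex_hull v)
            (\<lambda>x. \<Sum>k\<in>UNIV. pd (p1_interp v Bv) x k \<bullet>
                 pd (p1_interp v (\<lambda>i. matrix_inv (mat_fun (beta \<delta>) (Bv i)))) x k)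
          \<ge> 1 / real CARD('n) * integral (simplex_hull v)
            (\<lambda>x. \<Sum>k\<in>UNIV. (pd (p1_interp v (\<lambda>i. trace (mat_fun ln (mat_fun (beta \<delta>) (Bv i))))) x k)\<^sup>2)
       \<and> 1 / real CARD('n) * integral (simplex_hull v)
            (\<lambda>x. \<Sum>k\<in>UNIV. (pd (p1_interp v (\<lambda>i. trace (mat_fun ln (mat_fun (beta \<delta>) (Bv i))))) x k)\<^sup>2)
         = 1 / real CARD('n) * integral (simplex_hull v)
            (\<lambda>x. \<Sum>k\<in>UNIV. (pd (p1_interp v (\<lambda>i. trace (mat_fun ln (matrix_inv (mat_fun (beta \<delta>) (Bv i)))))) x k)\<^sup>2)"
proof -
  let ?I = "{0..CARD('n)}"
  define Bi where "Bi i = matrix_inv (mat_fun (beta \<delta>) (Bv i))" for i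
  define t where "t i = trace (mat_fun ln (mat_fun (beta \<delta>) (Bv i)))" for i
  define t' where "t' i = trace (mat_fun ln (matrix_inv (mat_fun (beta \<delta>) (Bv i))))" for i
  obtain W where W: "bary_gradients v W" using bary_gradients_exist[OF assms(4,5)] .
  define G where "G i j = W i \<bullet> W j" for i j
  note dirichlet = p1_interp_gradient_inner[OF assms(4,5) W, folded G_def]
  have square: "(\<Sum>k\<in>UNIV. (pd (p1_interp v s) x k)\<^sup>2) = (\<Sum>i\<in>?I. \<Sum>j\<in>?I. G i j * (s i * s j))"
    for s :: "nat \<Rightarrow> real" and x
    using dirichlet[of s x s] by (simp add: power2_eq_square)
  have "t' i = - t i" if "i \<in> ?I" for i
    using trace_ln_inverse_beta[of "Bv i" \<delta>] assms(2,7) that by (simp add: t_def t'_def)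
  then have t': "(\<Sum>i\<in>?I. \<Sum>j\<in>?I. G i j * (t' i * t' j)) = (\<Sum>i\<in>?I. \<Sum>j\<in>?I. G i j * (t i * t j))"
    by (intro sum.cong) auto
  have "1 / real CARD('n) * (\<Sum>i\<in>?I. \<Sum>j\<in>?I. G i j * (t i * t j))
      \<le> - (\<Sum>i\<in>?I. \<Sum>j\<in>?I. G i j * (Bv i \<bullet> Bi j))"
    using nonobtuse_stiffness_form_le[OF assms(4,5) _ assms(6) W assms(7,2)] assms(1)
    by (force simp: G_def t_def Bi_def)
  from mult_right_mono[OF this integral_one_nonneg]
  show ?thesis
    unfolding t'_def[symmetric] t_def[symmetric]
    unfolding Bi_def[symmetric] dirichlet square t'
      integral_const_real[of _ "\<Sum>i\<in>?I. \<Sum>j\<in>?I. G i j * (Bv i \<bullet> Bi j)"]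
      integral_const_real[of _ "\<Sum>i\<in>?I. \<Sum>j\<in>?I. G i j * (t i * t j)"]
    by simp
qed
end
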